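(* For every integer $n\ge0$, $$J\mathcal{G}_{n+2}^{(3)}-4J\mathcal{G}_{n}^{(3)}=-\frac{1}{7}\left[X_{n}(5\mathbf{A}+\mathbf{B})+X_{n+1}(\mathbf{A}-4\mathbf{B})\right]$$ and $$K\mathcal{G}_{n+2}^{(3)}-4K\mathcal{G}_{n}^{(3)}=-X_{n}(5\mathbf{C}+\mathbf{D})-X_{n+1}(\mathbf{C}-4\mathbf{D}),$$ where $\mathbf{A}=1+2\mathbf{e}_1-3\mathbf{e}_2+\mathbf{e}_3$, $\mathbf{B}=2-3\mathbf{e}_1+\mathbf{e}_2+2\mathbf{e}_3$, $\mathbf{C}=1-2\mathbf{e}_1+\mathbf{e}_2+\mathbf{e}_3$, $\mathbf{D}=-2+\mathbf{e}_1+\mathbf{e}_2-2\mathbf{e}_3$.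
   Context: Fix real numbers $\lambda_1,\lambda_2,\lambda_3$. The algebra $\mathbb{H}_{\lambda_1,\lambda_2,\lambda_3}$ of 3-parameter generalized quaternions is the real associative algebra of elements $\psi_0+\psi_1\mathbf{e}_1+\psi_2\mathbf{e}_2+\psi_3\mathbf{e}_3$ ($\psi_i\in\mathbb{R}$) with $\mathbf{e}_1^2=-\lambda_1\lambda_2$, $\mathbf{e}_2^2=-\lambda_1\lambda_3$, $\mathbf{e}_3^2=-\lambda_2\lambda_3$, $\mathbf{e}_1\mathbf{e}_2=-\mathbf{e}_2\mathbf{e}_1=\lambda_1\mathbf{e}_3$, $\mathbf{e}_1\mathbf{e}_3=-\mathbf{e}_3\mathbf{e}_1=-\lambda_2\mathbf{e}_2$, $\mathbf{e}_2\mathbf{e}_3=-\mathbf{e}_3\mathbf{e}_2=\lambda_3\mathbf{e}_1$. The third-order Jacobsthal numbers are $J_0^{(3)}=0$, $J_1^{(3)}=J_2^{(3)}=1$, $J_n^{(3)}=J_{n-1}^{(3)}+J_{n-2}^{(3)}+2J_{n-3}^{(3)}$ for $n\ge3$; the modified third-order Jacobsthal numbers are $K_0^{(3)}=3$, $K_1^{(3)}=1$, $K_2^{(3)}=3$, $K_n^{(3)}=K_{n-1}^{(3)}+K_{n-2}^{(3)}+2K_{n-3}^{(3)}$ for $n\ge3$. For $n\ge0$ define $J\mathcal{G}_n^{(3)}=J_n^{(3)}+J_{n+1}^{(3)}\mathbf{e}_1+J_{n+2}^{(3)}\mathbf{e}_2+J_{n+3}^{(3)}\mathbf{e}_3$ and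 $K\mathcal{G}_n^{(3)}=K_n^{(3)}+K_{n+1}^{(3)}\mathbf{e}_1+K_{n+2}^{(3)}\mathbf{e}_2+K_{n+3}^{(3)}\mathbf{e}_3$. The integer sequence $X_n$ is defined by $X_n=0,1,-1$ according as $n\equiv0,1,2\pmod 3$. *)

theory Defs
  imports Main Complex_Main
begin

text \<open>Elements psi0 + psi1 e1 + psi2 e2 + psi3 e3 of the 3-parameter generalized
quaternions H_{l1,l2,l3}, represented by their four real coordinates.\<close>
datatype gq = GQ real real real real

fun gq_add :: "gq \<Rightarrow> gq \<Rightarrow> gq" where
  "gq_add (GQ a0 a1 a2 a3) (GQ b0 b1 b2 b3) = GQ (a0+b0) (a1+b1) (a2+b2) (a3+b3)"

fun gq_sub :: "gq \<Rightarrow> gq \<Rightarrow> gq" where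
  "gq_sub (GQ a0 a1 a2 a3) (GQ b0 b1 b2 b3) = GQ (a0-b0) (a1-b1) (a2-b2) (a3-b3)"

fun gq_scale :: "real \<Rightarrow> gq \<Rightarrow> gq" where
  "gq_scale c (GQ a0 a1 a2 a3) = GQ (c*a0) (c*a1) (c*a2) (c*a3)"

fun gq_mult :: "real \<Rightarrow> real \<Rightarrow> real \<Rightarrow> gq \<Rightarrow> gq \<Rightarrow> gq" where
  "gq_mult l1 l2 l3 (GQ a0 a1 a2 a3) (GQ b0 b1 b2 b3) =
     GQ (a0*b0 - l1*l2*a1*b1 - l1*l3*a2*b2 - l2*l3*a3*b3)
        (a0*b1 + a1*b0 + l3*(a2*b3 - a3*b2))
        (a0*b2 + a2*b0 - l2*(a1*b3 - a3*b1))
        (a0*b3 + a3*b0 + l1*(a1*b2 - a2*b1))"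

fun Jac3 :: "nat \<Rightarrow> int" where
  "Jac3 0 = 0"
| "Jac3 (Suc 0) = 1"
| "Jac3 (Suc (Suc 0)) = 1"
| "Jac3 (Suc (Suc (Suc n))) = Jac3 (Suc (Suc n)) + Jac3 (Suc n) + 2 * Jac3 n"

fun KJac3 :: "nat \<Rightarrow> int" where
  "KJac3 0 = 3"
| "KJac3 (Suc 0) = 1"
| "KJac3 (Suc (Suc 0)) = 3"
| "KJac3 (Suc (Suc (Suc n))) = KJac3 (Suc (Suc n)) + KJac3 (Suc n) + 2 * KJac3 n"

definition JG :: "nat \<Rightarrow> gq" where
  "JG n = GQ (of_int (Jac3 n)) (of_int (Jac3 (n+1))) (of_int (Jac3 (n+2))) (of_int (Jac3 (n+3)))"

definition KG :: "nat \<Rightarrow> gq" where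
  "KG n = GQ (of_int (KJac3 n)) (of_int (KJac3 (n+1))) (of_int (KJac3 (n+2))) (of_int (KJac3 (n+3)))"

definition Xs :: "nat \<Rightarrow> int" where
  "Xs n = (if n mod 3 = 0 then 0 else if n mod 3 = 1 then 1 else -1)"

definition gqA :: gq where "gqA = GQ 1 2 (-3) 1"
definition gqB :: gq where "gqB = GQ 2 (-3) 1 2"
definition gqC :: gq where "gqC = GQ 1 (-2) 1 1"
definition gqD :: gq where "gqD = GQ (-2) 1 1 (-2)"

end

theory Submission
  imports Defs
begin

text \<open>The characteristic polynomial of the third-order Jacobsthal recurrence factors as
  x^3 - x^2 - x - 2 = (x - 2)(x^2 + x + 1). Passing from a sequence a(n) to a(n+2) - 4 a(n)
  applies x^2 - 4 and so kills the 2^n-component: what remains solves u(n+2) + u(n+1) + u(n) = 0,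
  whose solutions are the combinations of X(n) and X(n+1). Hence each coordinate of
  G(n+2) - 4 G(n) is such a combination, with coefficients read off from the first few terms.\<close>

lemma Jacobsthal_rec_diff_cyclotomic:
  fixes a :: "nat \<Rightarrow> 'a::comm_ring_1"
  assumes rec: "\<And>n. a (n + 3) = a (n + 2) + a (n + 1) + 2 * a n"
  defines "u \<equiv> \<lambda>k. a (k + 2) - 4 * a k"
  shows "u (n + 2) + u (n + 1) + u n = 0"
  using rec[of n] rec[of "n + 1"] by (simp add: u_def algebra_simps numeral_eq_Suc)

lemma Xs_rec: "Xs (n + 2) + Xs (n + 1) + Xs n = 0"
  by (simp add: Xs_def) presburger

lemma cyclotomic_rec_eq_Xs:
  fixes u :: "nat \<Rightarrow> 'a::comm_ring_1"
  assumes rec: "\<And>n. u (n + 2) + u (n + 1) + u n = 0"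
  shows "u (n + k) = (u k + u (k + 1)) * of_int (Xs n) + u k * of_int (Xs (n + 1))"
proof -
  define c d where "c = u k + u (k + 1)" and "d = u k"
  define X where "X = (\<lambda>n. of_int (Xs n) :: 'a)"
  have X_rec: "X (n + 2) = - X (n + 1) - X n" for n
    using arg_cong[OF Xs_rec[of n], of "of_int :: int \<Rightarrow> 'a"]
    by (simp add: X_def eq_neg_iff_add_eq_0 algebra_simps)
  have u_rec: "u (n + 2 + k) = - u (n + 1 + k) - u (n + k)" for n
    using rec[of "n + k"] by (simp add: eq_neg_iff_add_eq_0 algebra_simps)
  have "u (n + k) = c * X n + d * X (n + 1) \<and> u (n + 1 + k) = c * X (n + 1) + d * X (n + 2)"
  proof (induction n)
    case 0
    show ?case by (simp add: c_def d_def X_def Xs_def)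
  next
    case (Suc n)
    have "u (n + 2 + k) = - (c * X (n + 1) + d * X (n + 2)) - (c * X n + d * X (n + 1))"
      using Suc.IH u_rec[of n] by simp
    also have "\<dots> = c * X (n + 2) + d * X (n + 3)"
    proof -
      have "X (n + 3) = - X (n + 2) - X (n + 1)"
        using X_rec[of "n + 1"] by (simp add: numeral_eq_Suc)
      then show ?thesis
        by (simp only: X_rec[of n]) (simp add: algebra_simps)
    qed
    finally show ?case
      using Suc.IH by (simp add: eval_nat_numeral)
  qed
  then show ?thesis by (simp add: c_def d_def X_def)
qed

lemma Jac3_rec: "Jac3 (n + 3) = Jac3 (n + 2) + Jac3 (n + 1) + 2 * Jac3 n"
  by (simp add: numeral_eq_Suc)

lemma KJac3_rec: "KJac3 (n + 3) = KJac3 (n + 2) + KJac3 (n + 1) + 2 * KJac3 n"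
  by (simp add: numeral_eq_Suc)

definition gq_seq :: "(nat \<Rightarrow> real) \<Rightarrow> nat \<Rightarrow> gq" where
  "gq_seq a n = GQ (a n) (a (n + 1)) (a (n + 2)) (a (n + 3))"

lemma JG_eq_gq_seq: "JG n = gq_seq (\<lambda>k. of_int (Jac3 k)) n"
  by (simp add: JG_def gq_seq_def)

lemma KG_eq_gq_seq: "KG n = gq_seq (\<lambda>k. of_int (KJac3 k)) n"
  by (simp add: KG_def gq_seq_def)

lemma gq_seq_Jacobsthal_diff:
  assumes rec: "\<And>n. a (n + 3) = a (n + 2) + a (n + 1) + 2 * a n"
  defines "u \<equiv> \<lambda>k. a (k + 2) - 4 * a k"
  shows "gq_sub (gq_seq a (n + 2)) (gq_scale 4 (gq_seq a n)) =
    gq_add (gq_scale (of_int (Xs n)) (gq_seq (\<lambda>k. u k + u (k + 1)) 0))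
           (gq_scale (of_int (Xs (n + 1))) (gq_seq u 0))"
proof -
  have "u (n + 2) + u (n + 1) + u n = 0" for n
    unfolding u_def by (rule Jacobsthal_rec_diff_cyclotomic[OF rec])
  from cyclotomic_rec_eq_Xs[OF this]
  have "u (n + k) = (u k + u (k + 1)) * of_int (Xs n) + u k * of_int (Xs (n + 1))" for k .
  note u_shift = this[of 0, simplified] this[of 1] this[of 2] this[of 3]
  have "gq_sub (gq_seq a (n + 2)) (gq_scale 4 (gq_seq a n)) = gq_seq u n"
    by (simp add: gq_seq_def u_def add.assoc)
  also have "\<dots> = gq_add (gq_scale (of_int (Xs n)) (gq_seq (\<lambda>k. u k + u (k + 1)) 0))
           (gq_scale (of_int (Xs (n + 1))) (gq_seq u 0))"
    unfolding gq_seq_def u_shift by (simp add: algebra_simps eval_nat_numeral)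
  finally show ?thesis .
qed

theorem theorem4p3:
  fixes n :: nat
  shows "gq_sub (JG (n+2)) (gq_scale 4 (JG n)) =
           gq_scale (-1/7)
             (gq_add (gq_scale (of_int (Xs n)) (gq_add (gq_scale 5 gqA) gqB))
                     (gq_scale (of_int (Xs (n+1))) (gq_sub gqA (gq_scale 4 gqB)))) \<and>
         gq_sub (KG (n+2)) (gq_scale 4 (KG n)) =
           gq_sub (gq_scale (- of_int (Xs n)) (gq_add (gq_scale 5 gqC) gqD))
                  (gq_scale (of_int (Xs (n+1))) (gq_sub gqC (gq_scale 4 gqD)))"
proof -
  have J: "gq_sub (JG (n + 2)) (gq_scale 4 (JG n)) =
      gq_add (gq_scale (of_int (Xs n)) (GQ (-1) (-1) 2 (-1)))
             (gq_scale (of_int (Xs (n + 1))) (GQ 1 (-2) 1 1))"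
    unfolding JG_eq_gq_seq
    by (subst gq_seq_Jacobsthal_diff) (simp_all add: Jac3_rec gq_seq_def eval_nat_numeral)
  have K: "gq_sub (KG (n + 2)) (gq_scale 4 (KG n)) =
      gq_add (gq_scale (of_int (Xs n)) (GQ (-3) 9 (-6) (-3)))
             (gq_scale (of_int (Xs (n + 1))) (GQ (-9) 6 3 (-9)))"
    unfolding KG_eq_gq_seq
    by (subst gq_seq_Jacobsthal_diff) (simp_all add: KJac3_rec gq_seq_def eval_nat_numeral)
  show ?thesis
    unfolding J K by (simp add: gqA_def gqB_def gqC_def gqD_def field_simps)
qed

end
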